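(* Let $\delta\ge 0$ be a real number, $m\in\mathbb{N}$, and let $g,u,c:\mathbb{R}\to[0,\infty)$ be continuous functions. Let $\{\varepsilon_t\}_t$ be an i.i.d. sequence with mean $0$ and variance $1$, let $\{x_t\}_t$ be a strictly stationary ergodic process independent of $\{\varepsilon_t\}_t$, with $\{(\varepsilon_t,x_t)\}_t$ adapted to a filtration $\{\mathcal{F}_t\}_t$, and let $\{R_t\}_t$ be given by the model $$R_t=\sigma_t\varepsilon_t,\qquad \sigma_t^{\delta}=g(\varepsilon_{t-1})+u(x_{t-1})+c(\varepsilon_{t-1})\sigma_{t-1}^{\delta}.$$ Assume $E|\varepsilon_t|^{m\delta}<\infty$, $E(u(x_t))^{m}<\infty$ and $E(g(\varepsilon_t))^{m}<\infty$. Then the following are equivalent: (i) $E|R_t|^{m\delta}<\infty$; (ii) $E(c(\varepsilon_t))^{m}<1$.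
   Context: The functions $g,u,c$ are assumed chosen so that $P(\sigma_t>0)=1$ for every $t$. *)

theory Defs
  imports "HOL-Probability.Probability"
begin

definition strictly_stationary :: "'a measure \<Rightarrow> (int \<Rightarrow> 'a \<Rightarrow> real) \<Rightarrow> bool" where
  "strictly_stationary M X \<longleftrightarrow>
     (\<forall>h::int. \<forall>J::int set. finite J \<longrightarrow>
        distr M (PiM J (\<lambda>_. borel)) (\<lambda>\<omega>. \<lambda>j\<in>J. X (j + h) \<omega>)
      = distr M (PiM J (\<lambda>_. borel)) (\<lambda>\<omega>. \<lambda>j\<in>J. X j \<omega>))"

definition shift_path :: "(int \<Rightarrow> real) \<Rightarrow> (int \<Rightarrow> real)" where
  "shift_path f = (\<lambda>t. f (t + 1))"

definition ergodic_process :: "'a measure \<Rightarrow> (int \<Rightarrow> 'a \<Rightarrow> real) \<Rightarrow> bool" where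
  "ergodic_process M X \<longleftrightarrow>
     (\<forall>A \<in> sets (PiM (UNIV::int set) (\<lambda>_. borel)).
        shift_path -` A = A \<longrightarrow>
        measure M {\<omega> \<in> space M. (\<lambda>t. X t \<omega>) \<in> A} \<in> {0, 1})"

text \<open>The causal (non-anticipative) expansion of the model
  \<open>\<sigma>_t^\<delta> = g(\<epsilon>_{t-1}) + u(x_{t-1}) + c(\<epsilon>_{t-1}) \<sigma>_{t-1}^\<delta>\<close>: the k-th term is
  \<open>c(\<epsilon>_{t-1})\<cdots>c(\<epsilon>_{t-k}) (g(\<epsilon>_{t-k-1}) + u(x_{t-k-1}))\<close>.\<close>
definition sol_term ::
  "(real \<Rightarrow> real) \<Rightarrow> (real \<Rightarrow> real) \<Rightarrow> (real \<Rightarrow> real) \<Rightarrow>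
   (int \<Rightarrow> 'a \<Rightarrow> real) \<Rightarrow> (int \<Rightarrow> 'a \<Rightarrow> real) \<Rightarrow> int \<Rightarrow> 'a \<Rightarrow> nat \<Rightarrow> real" where
  "sol_term g u c eps x t \<omega> k =
     (\<Prod>j\<in>{1..k}. c (eps (t - int j) \<omega>)) *
     (g (eps (t - int k - 1) \<omega>) + u (x (t - int k - 1) \<omega>))"

end

theory Submission
  imports Defs
begin

text \<open>Multiply the causal expansion \<open>\<sigma>_t^\<delta> = \<Sum>_k T_k\<close> by \<open>|\<epsilon>_t|^\<delta>\<close>, so that
  \<open>|R_t|^{m\<delta>} = (\<Sum>_k T_k |\<epsilon>_t|^\<delta>)^m\<close>. The \<open>k\<close>-th term is a product of functions of the
  independent \<open>\<epsilon>_{t-k-1}, \<dots>, \<epsilon>_t\<close> and of \<open>x_{t-k-1}\<close>, which is independent of \<open>\<epsilon>\<close>;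
  hence its \<open>m\<close>-th moment is \<open>q^k B\<close> with \<open>q = E c(\<epsilon>_t)^m\<close> and a constant \<open>B\<close>, which is finite
  by the moment assumptions and nonzero because \<open>\<epsilon>_t\<close> has variance 1 and \<open>\<sigma>_t > 0\<close>.
  Superadditivity of \<open>y \<mapsto> y^m\<close> bounds \<open>E |R_t|^{m\<delta>}\<close> below by \<open>\<Sum>_k q^k B\<close>, which
  diverges for \<open>q \<ge> 1\<close>. For \<open>q < 1\<close>, Jensen's inequality with geometric weights \<open>r^k\<close>,
  where \<open>q < r^{m-1} < 1\<close>, bounds it above by \<open>(1 - r)^{1-m} \<Sum>_k (q r^{1-m})^k B < \<infinity>\<close>.\<close>

lemma add_power_le_power_add:
  fixes a b :: real
  assumes "a \<ge> 0" "b \<ge> 0" "m \<ge> 1"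
  shows "a ^ m + b ^ m \<le> (a + b) ^ m"
proof -
  obtain m' where m: "m = Suc m'" using assms(3) by (cases m) auto
  have "a * a ^ m' \<le> a * (a + b) ^ m'" using assms by (intro mult_left_mono power_mono) auto
  moreover have "b * b ^ m' \<le> b * (a + b) ^ m'" using assms by (intro mult_left_mono power_mono) auto
  ultimately show ?thesis by (simp add: m algebra_simps)
qed

lemma power_add_le_two_power:
  fixes a b :: real
  assumes "a \<ge> 0" "b \<ge> 0"
  shows "(a + b) ^ m \<le> 2 ^ m * (a ^ m + b ^ m)"
proof -
  have "(a + b) ^ m \<le> (2 * max a b) ^ m" using assms by (intro power_mono) auto
  also have "\<dots> = 2 ^ m * max a b ^ m" by (simp add: power_mult_distrib)
  also have "\<dots> \<le> 2 ^ m * (a ^ m + b ^ m)" using assms by (auto simp: max_def)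
  finally show ?thesis .
qed

lemma sum_power_le_power_sum:
  fixes f :: "'b \<Rightarrow> real"
  assumes "\<And>k. k \<in> A \<Longrightarrow> f k \<ge> 0" "m \<ge> 1"
  shows "(\<Sum>k\<in>A. f k ^ m) \<le> (\<Sum>k\<in>A. f k) ^ m"
  using assms(1)
proof (induction A rule: infinite_finite_induct)
  case (insert k A)
  then have "(\<Sum>i\<in>insert k A. f i ^ m) \<le> f k ^ m + (\<Sum>i\<in>A. f i) ^ m" by simp
  also have "\<dots> \<le> (f k + (\<Sum>i\<in>A. f i)) ^ m"
    using insert assms(2) by (intro add_power_le_power_add sum_nonneg) auto
  finally show ?case using insert by simp
qed simp_all

lemma suminf_power_le_power_suminf:
  fixes T :: "nat \<Rightarrow> real"
  assumes T: "\<And>k. T k \<ge> 0" "T sums S" and m: "m \<ge> 1"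
  shows "(\<Sum>k. ennreal (T k ^ m)) \<le> ennreal (S ^ m)"
proof (rule suminf_le_const)
  fix N
  have "(\<Sum>k<N. T k ^ m) \<le> (\<Sum>k<N. T k) ^ m" using T(1) m by (rule sum_power_le_power_sum)
  also have "\<dots> \<le> S ^ m"
    using T by (intro power_mono) (auto simp: sums_iff sum_nonneg intro!: sum_le_suminf)
  finally show "(\<Sum>k<N. ennreal (T k ^ m)) \<le> ennreal (S ^ m)"
    using T(1) by (subst sum_ennreal) (auto intro: ennreal_leI)
qed simp

text \<open>Jensen's inequality for \<open>x \<mapsto> x ^ m\<close> with the geometric weights \<open>r ^ k / (\<Sum>k<N. r ^ k)\<close>.\<close>
lemma power_sum_le_weighted_sum_power:
  fixes T :: "nat \<Rightarrow> real"
  assumes T: "\<And>k. T k \<ge> 0" and m: "m \<ge> 1" and r: "0 < r" "r < 1"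
  shows "(\<Sum>k<N. T k) ^ m \<le> (1 / (1 - r)) ^ (m - 1) * (\<Sum>k<N. T k ^ m / r ^ (k * (m - 1)))"
proof (cases "N = 0")
  case True then show ?thesis using m by (simp add: power_0_left)
next
  case False
  obtain m' where m': "m = Suc m'" using m by (cases m) auto
  define W where "W = (\<Sum>k<N. r ^ k)"
  have W_pos: "W > 0" unfolding W_def using False r by (intro sum_pos) auto
  have W_le: "W \<le> 1 / (1 - r)"
    using r by (simp add: W_def sum_gp_strict divide_right_mono)
  have convex: "convex_on {0::real..} (\<lambda>x. x ^ m)"
    by (cases "even m") (auto intro: convex_on_subset[OF convex_power_even] convex_power_odd)
  have "(\<Sum>k<N. T k) = (\<Sum>k<N. (r ^ k / W) *\<^sub>R (T k * W / r ^ k))"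
    using W_pos r by (intro sum.cong) auto
  then have "(\<Sum>k<N. T k) ^ m \<le> (\<Sum>k<N. (r ^ k / W) * (T k * W / r ^ k) ^ m)"
    using convex_on_sum[OF _ _ convex, of "{..<N}" "\<lambda>k. r ^ k / W" "\<lambda>k. T k * W / r ^ k"] False W_pos r T
    by (auto simp: W_def sum_divide_distrib[symmetric])
  also have "\<dots> = W ^ m' * (\<Sum>k<N. T k ^ m / r ^ (k * (m - 1)))"
    unfolding sum_distrib_left
    using W_pos r by (intro sum.cong) (auto simp: m' power_mult_distrib power_divide power_mult field_simps)
  also have "\<dots> \<le> (1 / (1 - r)) ^ (m - 1) * (\<Sum>k<N. T k ^ m / r ^ (k * (m - 1)))"
    using W_pos W_le T r by (intro mult_right_mono) (auto simp: m' intro!: power_mono sum_nonneg)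
  finally show ?thesis .
qed

lemma power_suminf_le_weighted_suminf_power:
  fixes T :: "nat \<Rightarrow> real"
  assumes T: "\<And>k. T k \<ge> 0" "T sums S" and m: "m \<ge> 1" and r: "0 < r" "r < 1"
  shows "ennreal (S ^ m)
    \<le> ennreal ((1 / (1 - r)) ^ (m - 1)) * (\<Sum>k. ennreal (T k ^ m / r ^ (k * (m - 1))))"
proof (rule LIMSEQ_le_const2)
  show "(\<lambda>N. ennreal ((\<Sum>k<N. T k) ^ m)) \<longlonglongrightarrow> ennreal (S ^ m)"
    using T(2) unfolding sums_def by (intro tendsto_ennrealI tendsto_power)
  show "\<exists>N0. \<forall>N\<ge>N0. ennreal ((\<Sum>k<N. T k) ^ m)
      \<le> ennreal ((1 / (1 - r)) ^ (m - 1)) * (\<Sum>k. ennreal (T k ^ m / r ^ (k * (m - 1))))"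
  proof (intro exI allI impI)
    fix N
    have "ennreal ((\<Sum>k<N. T k) ^ m)
        \<le> ennreal ((1 / (1 - r)) ^ (m - 1) * (\<Sum>k<N. T k ^ m / r ^ (k * (m - 1))))"
      using T(1) m r by (intro ennreal_leI power_sum_le_weighted_sum_power)
    also have "\<dots> = ennreal ((1 / (1 - r)) ^ (m - 1)) * (\<Sum>k<N. ennreal (T k ^ m / r ^ (k * (m - 1))))"
      using T(1) r by (simp add: ennreal_mult sum_nonneg sum_ennreal)
    also have "\<dots> \<le> ennreal ((1 / (1 - r)) ^ (m - 1)) * (\<Sum>k. ennreal (T k ^ m / r ^ (k * (m - 1))))"
      by (intro mult_left_mono sum_le_suminf) auto
    finally show "ennreal ((\<Sum>k<N. T k) ^ m)
        \<le> ennreal ((1 / (1 - r)) ^ (m - 1)) * (\<Sum>k. ennreal (T k ^ m / r ^ (k * (m - 1))))" .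
  qed
qed

lemma exists_power_gt:
  fixes q :: real
  assumes "q < 1"
  shows "\<exists>r. 0 < r \<and> r < 1 \<and> q < r ^ n"
proof -
  have "((\<lambda>r. r ^ n) \<longlongrightarrow> 1) (at_left (1::real))"
    by (intro tendsto_eq_intros) auto
  then have "eventually (\<lambda>r. q < r ^ n) (at_left 1)"
    using assms by (rule order_tendstoD)
  moreover have "eventually (\<lambda>r. r \<in> {0<..<1}) (at_left (1::real))"
    by (rule eventually_at_left_real) simp
  ultimately have "eventually (\<lambda>r. 0 < r \<and> r < 1 \<and> q < r ^ n) (at_left (1::real))"
    by eventually_elim auto
  then show ?thesis
    by (auto dest: eventually_happens)
qed

lemma powr_power':
  fixes a d :: real
  assumes "m \<noteq> 0"
  shows "(a powr d) ^ m = a powr (real m * d)"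
  using assms by (cases "a = 0") (simp_all add: powr_power)

lemma prod_int_interval_split:
  fixes h :: "int \<Rightarrow> 'b::comm_monoid_mult"
  shows "(\<Prod>i\<in>{t - int k - 1..t}. h i) = h (t - int k - 1) * (\<Prod>j\<in>{1..k}. h (t - int j)) * h t"
proof -
  have "{t - int k - 1..t} = (\<lambda>j. t - int j) ` {0..Suc k}"
  proof (intro equalityI subsetI)
    fix i assume "i \<in> {t - int k - 1..t}"
    then show "i \<in> (\<lambda>j. t - int j) ` {0..Suc k}"
      by (intro image_eqI[of _ _ "nat (t - i)"]) auto
  qed auto
  then have "(\<Prod>i\<in>{t - int k - 1..t}. h i) = (\<Prod>j\<in>{0..Suc k}. h (t - int j))"
    by (simp add: prod.reindex inj_on_def)
  also have "\<dots> = h t * (\<Prod>j\<in>{1..k}. h (t - int j)) * h (t - int k - 1)"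
    by (simp add: prod.atLeast0_atMost_Suc prod.atLeast_Suc_atMost algebra_simps)
  finally show ?thesis by (simp add: mult_ac)
qed
lemma nn_integral_cong_distr:
  assumes "X \<in> measurable M N" "Y \<in> measurable M N" "distr M N X = distr M N Y"
    and "f \<in> borel_measurable N"
  shows "(\<integral>\<^sup>+\<omega>. f (X \<omega>) \<partial>M) = (\<integral>\<^sup>+\<omega>. f (Y \<omega>) \<partial>M)"
proof -
  have "(\<integral>\<^sup>+\<omega>. f (X \<omega>) \<partial>M) = integral\<^sup>N (distr M N X) f"
    using assms(1,4) by (simp add: nn_integral_distr)
  also have "\<dots> = integral\<^sup>N (distr M N Y) f"
    by (simp only: assms(3))
  also have "\<dots> = (\<integral>\<^sup>+\<omega>. f (Y \<omega>) \<partial>M)"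
    using assms(2,4) by (simp add: nn_integral_distr)
  finally show ?thesis .
qed

lemma strictly_stationary_distr_eq:
  assumes stat: "strictly_stationary M x" and rv: "\<And>s. x s \<in> borel_measurable M"
  shows "distr M borel (x s) = distr M borel (x 0)"
proof -
  let ?P = "PiM {0::int} (\<lambda>_. borel :: real measure)"
  have eq: "distr M ?P (\<lambda>\<omega>. \<lambda>j\<in>{0}. x (j + s) \<omega>) = distr M ?P (\<lambda>\<omega>. \<lambda>j\<in>{0}. x j \<omega>)"
    using stat unfolding strictly_stationary_def by blast
  have [measurable]: "(\<lambda>\<omega>. \<lambda>j\<in>{0}. x (j + s) \<omega>) \<in> measurable M ?P"
    "(\<lambda>\<omega>. \<lambda>j\<in>{0}. x j \<omega>) \<in> measurable M ?P" "(\<lambda>f. f 0) \<in> measurable ?P borel"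
    using rv by measurable
  have "distr M borel (x s) = distr (distr M ?P (\<lambda>\<omega>. \<lambda>j\<in>{0}. x (j + s) \<omega>)) borel (\<lambda>f. f 0)"
    by (subst distr_distr) (auto simp: comp_def)
  also have "\<dots> = distr M borel (x 0)"
    unfolding eq by (subst distr_distr) (auto simp: comp_def)
  finally show ?thesis .
qed

lemma (in prob_space) nn_integral_indep_var:
  assumes ind: "indep_var S X T Y"
    and F: "case_prod F \<in> borel_measurable (S \<Otimes>\<^sub>M T)"
  shows "(\<integral>\<^sup>+\<omega>. F (X \<omega>) (Y \<omega>) \<partial>M) = (\<integral>\<^sup>+\<omega>'. (\<integral>\<^sup>+\<omega>. F (X \<omega>) (Y \<omega>') \<partial>M) \<partial>M)"
proof -
  have [measurable]: "X \<in> measurable M S" "Y \<in> measurable M T"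
    using ind by (auto dest: indep_var_rv1 indep_var_rv2)
  have eq: "distr M S X \<Otimes>\<^sub>M distr M T Y = distr M (S \<Otimes>\<^sub>M T) (\<lambda>\<omega>. (X \<omega>, Y \<omega>))"
    using ind indep_var_distribution_eq by blast
  interpret XY: pair_prob_space "distr M S X" "distr M T Y"
    by (simp add: pair_prob_space.intro pair_sigma_finite.intro prob_space_distr prob_space_imp_sigma_finite)
  have F_distr: "case_prod F \<in> borel_measurable (distr M S X \<Otimes>\<^sub>M distr M T Y)"
    using F by (subst measurable_cong_sets[OF sets_pair_measure_cong[OF sets_distr sets_distr] refl])
  have "(\<lambda>(y, \<omega>). F (X \<omega>) y) \<in> borel_measurable (T \<Otimes>\<^sub>M M)"
    using F by measurable
  then have inner: "(\<lambda>y. \<integral>\<^sup>+\<omega>. F (X \<omega>) y \<partial>M) \<in> borel_measurable T"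
    by (rule borel_measurable_nn_integral)
  have "(\<integral>\<^sup>+\<omega>. F (X \<omega>) (Y \<omega>) \<partial>M) = (\<integral>\<^sup>+z. case_prod F z \<partial>distr M (S \<Otimes>\<^sub>M T) (\<lambda>\<omega>. (X \<omega>, Y \<omega>)))"
    using F by (subst nn_integral_distr) auto
  also have "\<dots> = (\<integral>\<^sup>+z. case_prod F z \<partial>(distr M S X \<Otimes>\<^sub>M distr M T Y))"
    by (simp add: eq)
  also have "\<dots> = (\<integral>\<^sup>+y. (\<integral>\<^sup>+x. F x y \<partial>distr M S X) \<partial>distr M T Y)"
    using XY.nn_integral_snd[OF F_distr] by simp
  also have "\<dots> = (\<integral>\<^sup>+y. (\<integral>\<^sup>+\<omega>. F (X \<omega>) y \<partial>M) \<partial>distr M T Y)"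
    using F by (intro nn_integral_cong) (subst nn_integral_distr, auto)
  also have "\<dots> = (\<integral>\<^sup>+\<omega>'. (\<integral>\<^sup>+\<omega>. F (X \<omega>) (Y \<omega>') \<partial>M) \<partial>M)"
    using inner by (subst nn_integral_distr) auto
  finally show ?thesis .
qed

lemma (in prob_space) nn_integral_prod_iid:
  fixes X :: "'i \<Rightarrow> 'a \<Rightarrow> 'b" and f :: "'i \<Rightarrow> 'b \<Rightarrow> ennreal"
  assumes ind: "indep_vars (\<lambda>_. N) X UNIV"
    and ident: "\<And>i. distr M N (X i) = distr M N (X i0)"
    and J: "finite J" and f: "\<And>i. f i \<in> borel_measurable N"
  shows "(\<integral>\<^sup>+\<omega>. (\<Prod>i\<in>J. f i (X i \<omega>)) \<partial>M) = (\<Prod>i\<in>J. \<integral>\<^sup>+\<omega>. f i (X i0 \<omega>) \<partial>M)"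
proof -
  have rv: "X i \<in> measurable M N" for i
    using ind by (simp add: indep_vars_def)
  have "indep_vars (\<lambda>_. borel) (\<lambda>i \<omega>. f i (X i \<omega>)) J"
    by (rule indep_vars_compose2[OF indep_vars_subset[OF ind] f]) auto
  then have "(\<integral>\<^sup>+\<omega>. (\<Prod>i\<in>J. f i (X i \<omega>)) \<partial>M) = (\<Prod>i\<in>J. \<integral>\<^sup>+\<omega>. f i (X i \<omega>) \<partial>M)"
    by (rule indep_vars_nn_integral[OF J]) simp
  also have "\<dots> = (\<Prod>i\<in>J. \<integral>\<^sup>+\<omega>. f i (X i0 \<omega>) \<partial>M)"
    by (intro prod.cong refl nn_integral_cong_distr[OF rv rv ident f])
  finally show ?thesis .
qed

lemma (in prob_space) nn_integral_prod_window_iid: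
  fixes eps :: "int \<Rightarrow> 'a \<Rightarrow> real" and a b c :: "real \<Rightarrow> real"
  assumes eps_indep: "indep_vars (\<lambda>_. borel) eps UNIV"
    and eps_id: "\<And>s. distr M borel (eps s) = distr M borel (eps t)"
    and [measurable]: "a \<in> borel_measurable borel" "b \<in> borel_measurable borel" "c \<in> borel_measurable borel"
    and nonneg: "\<And>y. a y \<ge> 0" "\<And>y. b y \<ge> 0" "\<And>y. c y \<ge> 0"
  shows "(\<integral>\<^sup>+\<omega>. ennreal ((\<Prod>j\<in>{1..k}. c (eps (t - int j) \<omega>)) * a (eps (t - int k - 1) \<omega>) * b (eps t \<omega>)) \<partial>M)
    = (\<integral>\<^sup>+\<omega>. ennreal (c (eps t \<omega>)) \<partial>M) ^ k * (\<integral>\<^sup>+\<omega>. ennreal (a (eps t \<omega>)) \<partial>M)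
      * (\<integral>\<^sup>+\<omega>. ennreal (b (eps t \<omega>)) \<partial>M)"
proof -
  define s where "s = t - int k - 1"
  define f where "f i y = ennreal (if i = t then b y else if i = s then a y else c y)" for i y
  have [measurable]: "f i \<in> borel_measurable borel" for i
    unfolding f_def by measurable
  have middle: "(\<Prod>j\<in>{1..k}. f (t - int j) (e (t - int j))) = (\<Prod>j\<in>{1..k}. ennreal (c (e (t - int j))))"
    for e :: "int \<Rightarrow> real"
    by (intro prod.cong) (auto simp: f_def s_def)
  have "(\<integral>\<^sup>+\<omega>. ennreal ((\<Prod>j\<in>{1..k}. c (eps (t - int j) \<omega>)) * a (eps s \<omega>) * b (eps t \<omega>)) \<partial>M)
      = (\<integral>\<^sup>+\<omega>. (\<Prod>i\<in>{s..t}. f i (eps i \<omega>)) \<partial>M)"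
    using nonneg by (intro nn_integral_cong)
      (simp add: s_def prod_int_interval_split middle f_def ennreal_mult prod_ennreal prod_nonneg mult_ac)
  also have "\<dots> = (\<Prod>i\<in>{s..t}. \<integral>\<^sup>+\<omega>. f i (eps t \<omega>) \<partial>M)"
    by (rule nn_integral_prod_iid[OF eps_indep eps_id]) auto
  also have "\<dots> = (\<integral>\<^sup>+\<omega>. ennreal (c (eps t \<omega>)) \<partial>M) ^ k * (\<integral>\<^sup>+\<omega>. ennreal (a (eps t \<omega>)) \<partial>M)
      * (\<integral>\<^sup>+\<omega>. ennreal (b (eps t \<omega>)) \<partial>M)"
    by (simp add: s_def prod_int_interval_split middle f_def mult_ac)
  finally show ?thesis by (simp add: s_def)
qed

text \<open>The \<open>k\<close>-th term depends on \<open>x\<close> only through \<open>x_{t-k-1}\<close>: integrating over \<open>x\<close> last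
  leaves a product of functions of the independent \<open>\<epsilon>_{t-k-1}, \<dots>, \<epsilon>_t\<close>.\<close>
lemma (in prob_space) nn_integral_sol_term_power:
  fixes eps x :: "int \<Rightarrow> 'a \<Rightarrow> real" and g u c \<psi> :: "real \<Rightarrow> real"
  assumes eps_indep: "indep_vars (\<lambda>_. borel) eps UNIV"
    and eps_id: "\<And>s. distr M borel (eps s) = distr M borel (eps 0)"
    and x_rv: "\<And>s. x s \<in> borel_measurable M"
    and x_id: "\<And>s. distr M borel (x s) = distr M borel (x 0)"
    and indep_eps_x: "indep_var (PiM UNIV (\<lambda>_. borel)) (\<lambda>\<omega> s. eps s \<omega>)
      (PiM UNIV (\<lambda>_. borel)) (\<lambda>\<omega> s. x s \<omega>)"
    and [measurable]: "g \<in> borel_measurable borel" "u \<in> borel_measurable borel"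
      "c \<in> borel_measurable borel" "\<psi> \<in> borel_measurable borel"
    and nonneg: "\<And>y. g y \<ge> 0" "\<And>y. u y \<ge> 0" "\<And>y. c y \<ge> 0" "\<And>y. \<psi> y \<ge> 0"
  shows "(\<integral>\<^sup>+\<omega>. ennreal ((sol_term g u c eps x t \<omega> k * \<psi> (eps t \<omega>)) ^ m) \<partial>M)
    = (\<integral>\<^sup>+\<omega>. ennreal (c (eps t \<omega>) ^ m) \<partial>M) ^ k
      * ((\<integral>\<^sup>+\<omega>'. \<integral>\<^sup>+\<omega>. ennreal ((g (eps t \<omega>) + u (x t \<omega>')) ^ m) \<partial>M \<partial>M)
        * (\<integral>\<^sup>+\<omega>. ennreal (\<psi> (eps t \<omega>) ^ m) \<partial>M))"
    (is "_ = ?Q ^ k * (?A * ?\<Psi>)")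
proof -
  have [measurable]: "eps s \<in> borel_measurable M" for s
    using eps_indep by (simp add: indep_vars_def)
  note x_rv[measurable]
  have eps_id_t: "distr M borel (eps i) = distr M borel (eps t)" for i
    using eps_id[of i] eps_id[of t] by simp
  have x_id_t: "distr M borel (x i) = distr M borel (x t)" for i
    using x_id[of i] x_id[of t] by simp
  define s where "s = t - int k - 1"
  define G where "G v = (\<integral>\<^sup>+\<omega>. ennreal ((g (eps t \<omega>) + u v) ^ m) \<partial>M)" for v
  have G_meas[measurable]: "G \<in> borel_measurable borel"
    unfolding G_def by measurable
  define F where "F e \<xi> = ennreal ((\<Prod>j\<in>{1..k}. c (e (t - int j)) ^ m) * (g (e s) + u (\<xi> s)) ^ m
    * \<psi> (e t) ^ m)" for e \<xi> :: "int \<Rightarrow> real"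
  have F_meas: "case_prod F \<in> borel_measurable (PiM UNIV (\<lambda>_. borel) \<Otimes>\<^sub>M PiM UNIV (\<lambda>_. borel))"
    unfolding F_def by measurable
  have "(\<integral>\<^sup>+\<omega>. ennreal ((sol_term g u c eps x t \<omega> k * \<psi> (eps t \<omega>)) ^ m) \<partial>M)
      = (\<integral>\<^sup>+\<omega>. F (\<lambda>s. eps s \<omega>) (\<lambda>s. x s \<omega>) \<partial>M)"
    by (simp add: F_def sol_term_def s_def power_mult_distrib prod_power_distrib)
  also have "\<dots> = (\<integral>\<^sup>+\<omega>'. (\<integral>\<^sup>+\<omega>. F (\<lambda>s. eps s \<omega>) (\<lambda>s. x s \<omega>') \<partial>M) \<partial>M)"
    by (rule nn_integral_indep_var[OF indep_eps_x F_meas])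
  also have "\<dots> = (\<integral>\<^sup>+\<omega>'. ?Q ^ k * G (x s \<omega>') * ?\<Psi> \<partial>M)"
  proof (rule nn_integral_cong)
    fix \<omega>'
    show "(\<integral>\<^sup>+\<omega>. F (\<lambda>s. eps s \<omega>) (\<lambda>s. x s \<omega>') \<partial>M) = ?Q ^ k * G (x s \<omega>') * ?\<Psi>"
      using nn_integral_prod_window_iid[OF eps_indep eps_id_t, where c="\<lambda>y. c y ^ m"
          and a="\<lambda>y. (g y + u (x s \<omega>')) ^ m" and b="\<lambda>y. \<psi> y ^ m"] nonneg
      by (simp add: F_def G_def s_def prod_power_distrib)
  qed
  also have "\<dots> = ?Q ^ k * (\<integral>\<^sup>+\<omega>'. G (x s \<omega>') \<partial>M) * ?\<Psi>"
    by (simp add: nn_integral_cmult nn_integral_multc)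
  also have "(\<integral>\<^sup>+\<omega>'. G (x s \<omega>') \<partial>M) = ?A"
    using nn_integral_cong_distr[OF x_rv x_rv x_id_t G_meas] by (simp add: G_def)
  finally show ?thesis by (simp add: mult_ac)
qed

lemma (in prob_space) nn_integral_power_add_finite:
  fixes a b :: "'a \<Rightarrow> real"
  assumes [measurable]: "a \<in> borel_measurable M" "b \<in> borel_measurable M"
    and nonneg: "\<And>\<omega>. a \<omega> \<ge> 0" "\<And>\<omega>. b \<omega> \<ge> 0"
    and fin: "(\<integral>\<^sup>+\<omega>. ennreal (a \<omega> ^ m) \<partial>M) < \<infinity>" "(\<integral>\<^sup>+\<omega>. ennreal (b \<omega> ^ m) \<partial>M) < \<infinity>"
  shows "(\<integral>\<^sup>+\<omega>'. \<integral>\<^sup>+\<omega>. ennreal ((a \<omega> + b \<omega>') ^ m) \<partial>M \<partial>M) < \<infinity>"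
proof -
  have pointwise: "ennreal ((a \<omega> + b \<omega>') ^ m) \<le> ennreal (2 ^ m) * (ennreal (a \<omega> ^ m) + ennreal (b \<omega>' ^ m))"
    for \<omega> \<omega>'
    using power_add_le_two_power[OF nonneg(1)[of \<omega>] nonneg(2)[of \<omega>'], of m] nonneg
    by (simp add: ennreal_mult[symmetric] ennreal_plus[symmetric] del: ennreal_plus ennreal_leI)
  have "(\<integral>\<^sup>+\<omega>'. \<integral>\<^sup>+\<omega>. ennreal ((a \<omega> + b \<omega>') ^ m) \<partial>M \<partial>M)
      \<le> (\<integral>\<^sup>+\<omega>'. \<integral>\<^sup>+\<omega>. ennreal (2 ^ m) * (ennreal (a \<omega> ^ m) + ennreal (b \<omega>' ^ m)) \<partial>M \<partial>M)"
    by (intro nn_integral_mono pointwise)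
  also have "\<dots> = ennreal (2 ^ m) * ((\<integral>\<^sup>+\<omega>. ennreal (a \<omega> ^ m) \<partial>M) + (\<integral>\<^sup>+\<omega>. ennreal (b \<omega> ^ m) \<partial>M))"
    by (simp add: nn_integral_cmult nn_integral_add emeasure_space_1)
  also have "\<dots> < \<infinity>"
    using fin by (simp add: ennreal_mult_less_top)
  finally show ?thesis .
qed

lemma suminf_nn_integral_power_le:
  fixes T :: "nat \<Rightarrow> 'a \<Rightarrow> real"
  assumes T: "\<And>k. T k \<in> borel_measurable M" "\<And>k \<omega>. T k \<omega> \<ge> 0"
    and sums: "AE \<omega> in M. (\<lambda>k. T k \<omega>) sums S \<omega>" and m: "m \<ge> 1"
  shows "(\<Sum>k. \<integral>\<^sup>+\<omega>. ennreal (T k \<omega> ^ m) \<partial>M) \<le> (\<integral>\<^sup>+\<omega>. ennreal (S \<omega> ^ m) \<partial>M)"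
proof -
  have "(\<Sum>k. \<integral>\<^sup>+\<omega>. ennreal (T k \<omega> ^ m) \<partial>M) = (\<integral>\<^sup>+\<omega>. (\<Sum>k. ennreal (T k \<omega> ^ m)) \<partial>M)"
    using T(1) by (intro nn_integral_suminf[symmetric]) measurable
  also have "\<dots> \<le> (\<integral>\<^sup>+\<omega>. ennreal (S \<omega> ^ m) \<partial>M)"
    using sums by (intro nn_integral_mono_AE) (auto elim!: eventually_mono intro: suminf_power_le_power_suminf T m)
  finally show ?thesis .
qed

lemma nn_integral_power_suminf_le:
  fixes T :: "nat \<Rightarrow> 'a \<Rightarrow> real"
  assumes T: "\<And>k. T k \<in> borel_measurable M" "\<And>k \<omega>. T k \<omega> \<ge> 0"
    and sums: "AE \<omega> in M. (\<lambda>k. T k \<omega>) sums S \<omega>" and m: "m \<ge> 1" and r: "0 < r" "r < 1"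
  shows "(\<integral>\<^sup>+\<omega>. ennreal (S \<omega> ^ m) \<partial>M) \<le> ennreal ((1 / (1 - r)) ^ (m - 1))
    * (\<Sum>k. (\<integral>\<^sup>+\<omega>. ennreal (T k \<omega> ^ m) \<partial>M) * ennreal (1 / r ^ (m - 1)) ^ k)"
proof -
  have weight: "ennreal (T k \<omega> ^ m / r ^ (k * (m - 1))) = ennreal (T k \<omega> ^ m) * ennreal (1 / r ^ (m - 1)) ^ k"
    for k \<omega>
    using T(2) r by (simp add: ennreal_mult' ennreal_power power_mult mult.commute[of k] power_one_over
        divide_inverse power_inverse)
  have "(\<integral>\<^sup>+\<omega>. ennreal (S \<omega> ^ m) \<partial>M) \<le> (\<integral>\<^sup>+\<omega>. ennreal ((1 / (1 - r)) ^ (m - 1))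
      * (\<Sum>k. ennreal (T k \<omega> ^ m) * ennreal (1 / r ^ (m - 1)) ^ k) \<partial>M)"
  proof (intro nn_integral_mono_AE)
    show "AE \<omega> in M. ennreal (S \<omega> ^ m) \<le> ennreal ((1 / (1 - r)) ^ (m - 1))
      * (\<Sum>k. ennreal (T k \<omega> ^ m) * ennreal (1 / r ^ (m - 1)) ^ k)"
      using sums
    proof eventually_elim
      case (elim \<omega>)
      show ?case
        using power_suminf_le_weighted_suminf_power[OF T(2) elim m r] by (simp only: weight)
    qed
  qed
  also have "\<dots> = ennreal ((1 / (1 - r)) ^ (m - 1))
      * (\<Sum>k. (\<integral>\<^sup>+\<omega>. ennreal (T k \<omega> ^ m) \<partial>M) * ennreal (1 / r ^ (m - 1)) ^ k)"
    using T(1) by (simp add: nn_integral_cmult nn_integral_suminf nn_integral_multc)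
  finally show ?thesis .
qed

lemma nn_integral_power_suminf_infinite:
  fixes T :: "nat \<Rightarrow> 'a \<Rightarrow> real" and Q B :: ennreal
  assumes T: "\<And>k. T k \<in> borel_measurable M" "\<And>k \<omega>. T k \<omega> \<ge> 0"
    and sums: "AE \<omega> in M. (\<lambda>k. T k \<omega>) sums S \<omega>" and m: "m \<ge> 1"
    and moments: "\<And>k. (\<integral>\<^sup>+\<omega>. ennreal (T k \<omega> ^ m) \<partial>M) = Q ^ k * B"
    and Q: "Q \<ge> 1" and B: "B \<noteq> 0"
  shows "(\<integral>\<^sup>+\<omega>. ennreal (S \<omega> ^ m) \<partial>M) = \<infinity>"
proof (rule ccontr)
  assume fin: "(\<integral>\<^sup>+\<omega>. ennreal (S \<omega> ^ m) \<partial>M) \<noteq> \<infinity>"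
  have "B \<le> Q ^ k * B" for k
    using mult_right_mono[OF one_le_power[OF Q], of B k] by simp
  then have "(\<Sum>k. B) \<le> (\<Sum>k. Q ^ k * B)"
    by (intro suminf_le) auto
  also have "\<dots> \<le> (\<integral>\<^sup>+\<omega>. ennreal (S \<omega> ^ m) \<partial>M)"
    using suminf_nn_integral_power_le[OF T sums m] by (simp add: moments)
  finally have sum_fin: "(\<Sum>k. B) < \<infinity>"
    using fin by (metis infinity_ennreal_def le_less_trans less_top)
  then have "B < \<infinity>"
    by (rule ennreal_suminf_lessD)
  then obtain b where b: "B = ennreal b" "b \<ge> 0"
    by (cases B) auto
  with sum_fin have "summable (\<lambda>k. b)"
    by (intro summable_suminf_not_top) auto
  with B b show False
    by (simp add: summable_const_iff)
qed

lemma nn_integral_power_suminf_finite: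
  fixes T :: "nat \<Rightarrow> 'a \<Rightarrow> real" and Q B :: ennreal
  assumes T: "\<And>k. T k \<in> borel_measurable M" "\<And>k \<omega>. T k \<omega> \<ge> 0"
    and sums: "AE \<omega> in M. (\<lambda>k. T k \<omega>) sums S \<omega>" and m: "m \<ge> 1"
    and moments: "\<And>k. (\<integral>\<^sup>+\<omega>. ennreal (T k \<omega> ^ m) \<partial>M) = Q ^ k * B"
    and Q: "Q < 1" and B: "B < \<infinity>"
  shows "(\<integral>\<^sup>+\<omega>. ennreal (S \<omega> ^ m) \<partial>M) < \<infinity>"
proof -
  obtain q where q: "Q = ennreal q" "0 \<le> q" "q < 1"
    using Q by (cases Q) (auto simp: ennreal_less_one_iff)
  obtain r where r: "0 < r" "r < 1" "q < r ^ (m - 1)"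
    using exists_power_gt[OF q(3)] by blast
  define w where "w = 1 / r ^ (m - 1)"
  have w: "0 \<le> w" "q * w < 1"
    using q r by (auto simp: w_def field_simps)
  have "(\<integral>\<^sup>+\<omega>. ennreal (S \<omega> ^ m) \<partial>M)
      \<le> ennreal ((1 / (1 - r)) ^ (m - 1)) * (\<Sum>k. Q ^ k * B * ennreal w ^ k)"
    using nn_integral_power_suminf_le[OF T sums m r(1,2)] by (simp add: moments w_def)
  also have "\<dots> = ennreal ((1 / (1 - r)) ^ (m - 1)) * B * (\<Sum>k. ennreal ((q * w) ^ k))"
    using q(1,2) w(1) by (simp add: ennreal_mult ennreal_power power_mult_distrib mult_ac)
  also have "\<dots> < \<infinity>"
    using B q(2) w by (simp add: suminf_ennreal2 ennreal_mult_less_top)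
  finally show ?thesis .
qed

lemma nn_integral_power_suminf_finite_iff:
  fixes T :: "nat \<Rightarrow> 'a \<Rightarrow> real" and Q B :: ennreal
  assumes T: "\<And>k. T k \<in> borel_measurable M" "\<And>k \<omega>. T k \<omega> \<ge> 0"
    and sums: "AE \<omega> in M. (\<lambda>k. T k \<omega>) sums S \<omega>" and m: "m \<ge> 1"
    and moments: "\<And>k. (\<integral>\<^sup>+\<omega>. ennreal (T k \<omega> ^ m) \<partial>M) = Q ^ k * B"
    and B: "B < \<infinity>" and S: "\<not> (AE \<omega> in M. S \<omega> = 0)"
  shows "(\<integral>\<^sup>+\<omega>. ennreal (S \<omega> ^ m) \<partial>M) < \<infinity> \<longleftrightarrow> Q < 1"
proof
  have "B \<noteq> 0"
  proof
    assume "B = 0"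
    have "AE \<omega> in M. T k \<omega> = 0" for k
    proof -
      have "(\<integral>\<^sup>+\<omega>. ennreal (T k \<omega> ^ m) \<partial>M) = 0"
        using \<open>B = 0\<close> by (simp add: moments)
      then have "AE \<omega> in M. ennreal (T k \<omega> ^ m) = 0"
        using T(1) by (subst (asm) nn_integral_0_iff_AE) simp_all
      then show ?thesis
        using m by (auto elim!: eventually_mono simp: ennreal_eq_zero_iff T(2) zero_le_power)
    qed
    then have "AE \<omega> in M. \<forall>k. T k \<omega> = 0"
      by (simp add: AE_all_countable)
    with sums have "AE \<omega> in M. S \<omega> = 0"
      by eventually_elim (auto dest: sums_unique2[OF sums_zero])
    with S show False ..
  qed
  show "Q < 1" if fin: "(\<integral>\<^sup>+\<omega>. ennreal (S \<omega> ^ m) \<partial>M) < \<infinity>"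
  proof (rule ccontr)
    assume "\<not> Q < 1"
    then have "(\<integral>\<^sup>+\<omega>. ennreal (S \<omega> ^ m) \<partial>M) = \<infinity>"
      using \<open>B \<noteq> 0\<close> by (intro nn_integral_power_suminf_infinite[OF T sums m moments]) (simp_all add: not_less)
    with fin show False by simp
  qed
  show "(\<integral>\<^sup>+\<omega>. ennreal (S \<omega> ^ m) \<partial>M) < \<infinity>" if "Q < 1"
    by (rule nn_integral_power_suminf_finite[OF T sums m moments that B])
qed

theorem proposition3p3:
  fixes M :: "'a measure"
    and F :: "int \<Rightarrow> 'a measure"
    and eps x sigma R :: "int \<Rightarrow> 'a \<Rightarrow> real"
    and g u c :: "real \<Rightarrow> real"
    and \<delta> :: real and m :: nat and t :: int
  assumes P: "prob_space M"
    and delta: "\<delta> > 0"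
    and m: "m \<ge> 1"
    and cont: "continuous_on UNIV g" "continuous_on UNIV u" "continuous_on UNIV c"
    and nonneg: "\<And>y. g y \<ge> 0" "\<And>y. u y \<ge> 0" "\<And>y. c y \<ge> 0"
    \<comment> \<open>\<open>\<epsilon>\<close> i.i.d. with mean 0 and variance 1\<close>
    and eps_rv: "\<And>s. eps s \<in> borel_measurable M"
    and eps_indep: "prob_space.indep_vars M (\<lambda>_. borel) eps UNIV"
    and eps_id: "\<And>s. distr M borel (eps s) = distr M borel (eps 0)"
    and eps_int: "\<And>s. integrable M (eps s)" "\<And>s. integrable M (\<lambda>\<omega>. (eps s \<omega>)\<^sup>2)"
    and eps_mean: "\<And>s. (\<integral>\<omega>. eps s \<omega> \<partial>M) = 0"
    and eps_var: "\<And>s. (\<integral>\<omega>. (eps s \<omega>)\<^sup>2 \<partial>M) = 1"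
    \<comment> \<open>\<open>x\<close> strictly stationary, ergodic, independent of \<open>\<epsilon>\<close>\<close>
    and x_rv: "\<And>s. x s \<in> borel_measurable M"
    and x_stat: "strictly_stationary M x"
    and x_erg: "ergodic_process M x"
    and indep_eps_x: "prob_space.indep_var M
          (PiM (UNIV::int set) (\<lambda>_. borel)) (\<lambda>\<omega> s. eps s \<omega>)
          (PiM (UNIV::int set) (\<lambda>_. borel)) (\<lambda>\<omega> s. x s \<omega>)"
    \<comment> \<open>\<open>(\<epsilon>_t, x_t)\<close> adapted to a filtration \<open>F\<close>\<close>
    and filt_sub: "\<And>s. subalgebra M (F s)"
    and filt_mono: "\<And>s s'. s \<le> s' \<Longrightarrow> sets (F s) \<subseteq> sets (F s')"
    and adapted: "\<And>s. eps s \<in> borel_measurable (F s)" "\<And>s. x s \<in> borel_measurable (F s)"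
    \<comment> \<open>the model \<open>R_t = \<sigma>_t \<epsilon>_t\<close>, with \<open>\<sigma>_t^\<delta>\<close> the non-anticipative solution of the recursion\<close>
    and R_def: "\<And>s \<omega>. R s \<omega> = sigma s \<omega> * eps s \<omega>"
    and sigma_pos: "\<And>s. AE \<omega> in M. sigma s \<omega> > 0"
    and recursion: "\<And>s. AE \<omega> in M. sigma s \<omega> powr \<delta>
          = g (eps (s - 1) \<omega>) + u (x (s - 1) \<omega>) + c (eps (s - 1) \<omega>) * sigma (s - 1) \<omega> powr \<delta>"
    and solution: "\<And>s. AE \<omega> in M. sol_term g u c eps x s \<omega> sums (sigma s \<omega> powr \<delta>)"
    \<comment> \<open>moment assumptions\<close>
    and mom_eps: "\<And>s. (\<integral>\<^sup>+\<omega>. ennreal (\<bar>eps s \<omega>\<bar> powr (real m * \<delta>)) \<partial>M) < \<infinity>"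
    and mom_u: "\<And>s. (\<integral>\<^sup>+\<omega>. ennreal ((u (x s \<omega>)) ^ m) \<partial>M) < \<infinity>"
    and mom_g: "\<And>s. (\<integral>\<^sup>+\<omega>. ennreal ((g (eps s \<omega>)) ^ m) \<partial>M) < \<infinity>"
  shows "(\<integral>\<^sup>+\<omega>. ennreal (\<bar>R t \<omega>\<bar> powr (real m * \<delta>)) \<partial>M) < \<infinity>
     \<longleftrightarrow> (\<integral>\<^sup>+\<omega>. ennreal ((c (eps t \<omega>)) ^ m) \<partial>M) < 1"
proof -
  interpret prob_space M by (rule P)
  have [measurable]: "g \<in> borel_measurable borel" "u \<in> borel_measurable borel" "c \<in> borel_measurable borel"
    using cont by (auto intro: borel_measurable_continuous_onI)
  note eps_rv[measurable] x_rv[measurable]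
  define T where "T k \<omega> = sol_term g u c eps x t \<omega> k * \<bar>eps t \<omega>\<bar> powr \<delta>" for k \<omega>
  define S where "S \<omega> = sigma t \<omega> powr \<delta> * \<bar>eps t \<omega>\<bar> powr \<delta>" for \<omega>
  define A where "A = (\<integral>\<^sup>+\<omega>'. \<integral>\<^sup>+\<omega>. ennreal ((g (eps t \<omega>) + u (x t \<omega>')) ^ m) \<partial>M \<partial>M)"
  define E where "E = (\<integral>\<^sup>+\<omega>. ennreal ((\<bar>eps t \<omega>\<bar> powr \<delta>) ^ m) \<partial>M)"
  have T_meas: "T k \<in> borel_measurable M" for k
    unfolding T_def sol_term_def by measurable
  have T_nonneg: "T k \<omega> \<ge> 0" for k \<omega>
    using nonneg by (simp add: T_def sol_term_def prod_nonneg)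
  have T_sums: "AE \<omega> in M. (\<lambda>k. T k \<omega>) sums S \<omega>"
    using solution[of t] by eventually_elim (simp add: T_def S_def sums_mult2)
  have moments: "(\<integral>\<^sup>+\<omega>. ennreal (T k \<omega> ^ m) \<partial>M) = (\<integral>\<^sup>+\<omega>. ennreal (c (eps t \<omega>) ^ m) \<partial>M) ^ k * (A * E)"
    for k
    unfolding T_def A_def E_def
    by (subst nn_integral_sol_term_power[OF eps_indep eps_id x_rv strictly_stationary_distr_eq[OF x_stat x_rv]
        indep_eps_x]) (simp_all add: nonneg)
  have "A < \<infinity>"
    unfolding A_def
    by (rule nn_integral_power_add_finite[of "\<lambda>\<omega>. g (eps t \<omega>)" "\<lambda>\<omega>. u (x t \<omega>)"])
      (simp_all add: nonneg mom_g[simplified] mom_u[simplified])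
  moreover have "E < \<infinity>"
    using mom_eps[of t] m by (simp add: E_def powr_power')
  ultimately have constant_finite: "A * E < \<infinity>"
    by (simp add: ennreal_mult_less_top)
  have S_nonzero: "\<not> (AE \<omega> in M. S \<omega> = 0)"
  proof
    assume "AE \<omega> in M. S \<omega> = 0"
    with sigma_pos[of t] have "AE \<omega> in M. (eps t \<omega>)\<^sup>2 = 0"
      by eventually_elim (simp add: S_def)
    with eps_var[of t] show False
      by (simp add: integral_eq_zero_AE)
  qed
  have "\<bar>R t \<omega>\<bar> powr (real m * \<delta>) = S \<omega> ^ m" if "sigma t \<omega> > 0" for \<omega>
    using that m by (simp add: R_def S_def abs_mult powr_mult power_mult_distrib powr_power')
  then have "(\<integral>\<^sup>+\<omega>. ennreal (\<bar>R t \<omega>\<bar> powr (real m * \<delta>)) \<partial>M) = (\<integral>\<^sup>+\<omega>. ennreal (S \<omega> ^ m) \<partial>M)"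
    using sigma_pos[of t] by (intro nn_integral_cong_AE) (auto elim!: eventually_mono)
  then show ?thesis
    using nn_integral_power_suminf_finite_iff[OF T_meas T_nonneg T_sums m moments constant_finite S_nonzero]
    by simp
qed

end
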